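(* Let $\lambda \in P$. For every $\lhd \in \mathrm{RO}(\lambda, \Delta^{+})$ the total order $\prec_{\lhd}$ on $w(\lambda)\Delta^{+}$ belongs to $\mathrm{RO}(\lambda, w(\lambda)\Delta^{+})$, and the assignment $\lhd \mapsto \prec_{\lhd}$ is a bijection from $\mathrm{RO}(\lambda, \Delta^{+})$ onto $\mathrm{RO}(\lambda, w(\lambda)\Delta^{+})$.
   Context: Let $\mathfrak{g}$ be a finite-dimensional complex simple Lie algebra with root system $\Delta$, positive roots $\Delta^{+}$, Weyl group $W$ (with Bruhat order), weight lattice $P$, and pairing $\langle\cdot,\cdot\rangle$; $\alpha^\vee$ is the coroot of $\alpha$. For $\lambda \in P$ set $\Delta^{+}(\lambda)_{>0}$, $\Delta^{+}(\lambda)_{=0}$, $\Delta^{+}(\lambda)_{<0}$ to be the sets of $\alpha \in \Delta^{+}$ with $\langle \lambda, \alpha^{\vee}\rangle$ respectively $>0$, $=0$, $<0$. Let $\lambda_{+}$ be the dominant weight in $W\lambda$ and $w(\lambda)$ the Bruhat-maximal element of $\{w \in W \mid w\lambda_{+} = \lambda\}$; one has $w(\lambda)\Delta^{+} = \Delta^{+}(\lambda)_{>0} \sqcup (-\Delta^{+}(\lambda)_{<0}) \sqcup (-\Delta^{+}(\lambda)_{=0})$. For $w \in W$, a total order $\prec$ on $w\Delta^{+}$ is a reflection order if for all $\alpha,\beta \in w\Delta^{+}$ with $\alpha+\beta \in w\Delta^{+}$, either $\alpha \prec \alpha+\beta \prec \beta$ or $\beta \prec \alpha+\beta \prec \alpha$.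 Let $\mathrm{RO}(\lambda, \Delta^{+})$ be the set of reflection orders $\lhd$ on $\Delta^{+}$ such that $\alpha \lhd \beta \lhd \gamma$ for all $\alpha \in \Delta^{+}(\lambda)_{<0}$, $\beta \in \Delta^{+}(\lambda)_{=0}$, $\gamma \in \Delta^{+}(\lambda)_{>0}$. Let $\mathrm{RO}(\lambda, w(\lambda)\Delta^{+})$ be the set of reflection orders $\prec$ on $w(\lambda)\Delta^{+}$ such that $\gamma \prec -\alpha \prec -\beta$ for all $\gamma \in \Delta^{+}(\lambda)_{>0}$, $\alpha \in \Delta^{+}(\lambda)_{<0}$, $\beta \in \Delta^{+}(\lambda)_{=0}$. For $\lhd \in \mathrm{RO}(\lambda,\Delta^{+})$, the total order $\prec_{\lhd}$ on $w(\lambda)\Delta^{+}$ is defined as follows: every element of $\Delta^{+}(\lambda)_{>0}$ precedes every element of $-\Delta^{+}(\lambda)_{<0}$, which precedes every element of $-\Delta^{+}(\lambda)_{=0}$; on $\Delta^{+}(\lambda)_{>0}$, $\gamma \prec_{\lhd} \gamma'$ iff $\gamma \lhd \gamma'$; on $-\Delta^{+}(\lambda)_{<0}$ and on $-\Delta^{+}(\lambda)_{=0}$, $-\alpha \prec_{\lhd} -\alpha'$ iff $\alpha \lhd \alpha'$. *)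

theory Defs
  imports "HOL-Analysis.Analysis"
begin

(* Abstract (real) root system model of the root system of a simple Lie algebra. *)

definition cpair :: "'a::euclidean_space \<Rightarrow> 'a \<Rightarrow> real" where
  "cpair x \<alpha> = 2 * (x \<bullet> \<alpha>) / (\<alpha> \<bullet> \<alpha>)"

definition refl_map :: "'a::euclidean_space \<Rightarrow> 'a \<Rightarrow> 'a" where
  "refl_map \<alpha> x = x - cpair x \<alpha> *\<^sub>R \<alpha>"

definition root_system :: "'a::euclidean_space set \<Rightarrow> bool" where
  "root_system R \<longleftrightarrow> finite R \<and> 0 \<notin> R \<and> span R = UNIV \<and>
     (\<forall>\<alpha>\<in>R. \<forall>\<beta>\<in>R. refl_map \<alpha> \<beta> \<in> R \<and> cpair \<beta> \<alpha> \<in> \<int>) \<and>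
     (\<forall>\<alpha>\<in>R. \<forall>c. c *\<^sub>R \<alpha> \<in> R \<longrightarrow> c = 1 \<or> c = -1)"

definition irreducible_rs :: "'a::euclidean_space set \<Rightarrow> bool" where
  "irreducible_rs R \<longleftrightarrow> (\<forall>A B. A \<union> B = R \<and> A \<inter> B = {} \<and> (\<forall>\<alpha>\<in>A. \<forall>\<beta>\<in>B. \<alpha> \<bullet> \<beta> = 0)
       \<longrightarrow> A = {} \<or> B = {})"

definition regular_vec :: "'a::euclidean_space set \<Rightarrow> 'a \<Rightarrow> bool" where
  "regular_vec R \<rho> \<longleftrightarrow> (\<forall>\<alpha>\<in>R. \<alpha> \<bullet> \<rho> \<noteq> 0)"

definition pos_roots :: "'a::euclidean_space set \<Rightarrow> 'a \<Rightarrow> 'a set" where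
  "pos_roots R \<rho> = {\<alpha>\<in>R. 0 < \<alpha> \<bullet> \<rho>}"

inductive_set weyl_group :: "'a::euclidean_space set \<Rightarrow> ('a \<Rightarrow> 'a) set" for R where
  weyl_id: "id \<in> weyl_group R"
| weyl_step: "w \<in> weyl_group R \<Longrightarrow> \<alpha> \<in> R \<Longrightarrow> refl_map \<alpha> \<circ> w \<in> weyl_group R"

definition weights :: "'a::euclidean_space set \<Rightarrow> 'a set" where
  "weights R = {x. \<forall>\<alpha>\<in>R. cpair x \<alpha> \<in> \<int>}"

definition dominant :: "'a::euclidean_space set \<Rightarrow> 'a \<Rightarrow> 'a \<Rightarrow> bool" where
  "dominant R \<rho> x \<longleftrightarrow> (\<forall>\<alpha>\<in>pos_roots R \<rho>. cpair x \<alpha> \<ge> 0)"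

definition dom_weight :: "'a::euclidean_space set \<Rightarrow> 'a \<Rightarrow> 'a \<Rightarrow> 'a" where
  "dom_weight R \<rho> x = (THE \<mu>. \<mu> \<in> (\<lambda>w. w x) ` weyl_group R \<and> dominant R \<rho> \<mu>)"

definition wlen :: "'a::euclidean_space set \<Rightarrow> 'a \<Rightarrow> ('a \<Rightarrow> 'a) \<Rightarrow> nat" where
  "wlen R \<rho> w = card {\<alpha>\<in>pos_roots R \<rho>. w \<alpha> \<notin> pos_roots R \<rho>}"

definition bruhat_step :: "'a::euclidean_space set \<Rightarrow> 'a \<Rightarrow> ('a \<Rightarrow> 'a) \<Rightarrow> ('a \<Rightarrow> 'a) \<Rightarrow> bool" where
  "bruhat_step R \<rho> u v \<longleftrightarrow> u \<in> weyl_group R \<and> (\<exists>\<alpha>\<in>R. v = u \<circ> refl_map \<alpha>) \<and> wlen R \<rho> u < wlen R \<rho> v"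

definition bruhat_le :: "'a::euclidean_space set \<Rightarrow> 'a \<Rightarrow> ('a \<Rightarrow> 'a) \<Rightarrow> ('a \<Rightarrow> 'a) \<Rightarrow> bool" where
  "bruhat_le R \<rho> = (bruhat_step R \<rho>)\<^sup>*\<^sup>*"

definition w_of :: "'a::euclidean_space set \<Rightarrow> 'a \<Rightarrow> 'a \<Rightarrow> ('a \<Rightarrow> 'a)" where
  "w_of R \<rho> x = (THE w. w \<in> weyl_group R \<and> w (dom_weight R \<rho> x) = x \<and>
      (\<forall>v\<in>weyl_group R. v (dom_weight R \<rho> x) = x \<longrightarrow> bruhat_le R \<rho> v w))"

definition pos_gt :: "'a::euclidean_space set \<Rightarrow> 'a \<Rightarrow> 'a \<Rightarrow> 'a set" where
  "pos_gt R \<rho> x = {\<alpha>\<in>pos_roots R \<rho>. cpair x \<alpha> > 0}"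
definition pos_eq :: "'a::euclidean_space set \<Rightarrow> 'a \<Rightarrow> 'a \<Rightarrow> 'a set" where
  "pos_eq R \<rho> x = {\<alpha>\<in>pos_roots R \<rho>. cpair x \<alpha> = 0}"
definition pos_lt :: "'a::euclidean_space set \<Rightarrow> 'a \<Rightarrow> 'a \<Rightarrow> 'a set" where
  "pos_lt R \<rho> x = {\<alpha>\<in>pos_roots R \<rho>. cpair x \<alpha> < 0}"

definition strict_total_order_on :: "'a set \<Rightarrow> 'a rel \<Rightarrow> bool" where
  "strict_total_order_on S r \<longleftrightarrow> r \<subseteq> S \<times> S \<and> irrefl r \<and> trans r \<and> total_on S r"

definition reflection_order :: "'a::euclidean_space set \<Rightarrow> 'a rel \<Rightarrow> bool" where
  "reflection_order S r \<longleftrightarrow> strict_total_order_on S r \<and>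
     (\<forall>\<alpha>\<in>S. \<forall>\<beta>\<in>S. \<alpha> + \<beta> \<in> S \<longrightarrow>
        ((\<alpha>, \<alpha> + \<beta>) \<in> r \<and> (\<alpha> + \<beta>, \<beta>) \<in> r) \<or> ((\<beta>, \<alpha> + \<beta>) \<in> r \<and> (\<alpha> + \<beta>, \<alpha>) \<in> r))"

definition RO_pos :: "'a::euclidean_space set \<Rightarrow> 'a \<Rightarrow> 'a \<Rightarrow> 'a rel set" where
  "RO_pos R \<rho> x = {r. reflection_order (pos_roots R \<rho>) r \<and>
     (\<forall>\<alpha>\<in>pos_lt R \<rho> x. \<forall>\<beta>\<in>pos_eq R \<rho> x. (\<alpha>, \<beta>) \<in> r) \<and>
     (\<forall>\<beta>\<in>pos_eq R \<rho> x. \<forall>\<gamma>\<in>pos_gt R \<rho> x. (\<beta>, \<gamma>) \<in> r) \<and>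
     (\<forall>\<alpha>\<in>pos_lt R \<rho> x. \<forall>\<gamma>\<in>pos_gt R \<rho> x. (\<alpha>, \<gamma>) \<in> r)}"

definition RO_w :: "'a::euclidean_space set \<Rightarrow> 'a \<Rightarrow> 'a \<Rightarrow> 'a rel set" where
  "RO_w R \<rho> x = {r. reflection_order (w_of R \<rho> x ` pos_roots R \<rho>) r \<and>
     (\<forall>\<gamma>\<in>pos_gt R \<rho> x. \<forall>\<alpha>\<in>pos_lt R \<rho> x. (\<gamma>, -\<alpha>) \<in> r) \<and>
     (\<forall>\<alpha>\<in>pos_lt R \<rho> x. \<forall>\<beta>\<in>pos_eq R \<rho> x. (-\<alpha>, -\<beta>) \<in> r) \<and>
     (\<forall>\<gamma>\<in>pos_gt R \<rho> x. \<forall>\<beta>\<in>pos_eq R \<rho> x. (\<gamma>, -\<beta>) \<in> r)}"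

definition induced_order :: "'a::euclidean_space set \<Rightarrow> 'a \<Rightarrow> 'a \<Rightarrow> 'a rel \<Rightarrow> 'a rel" where
  "induced_order R \<rho> x r =
     {(a, b). a \<in> pos_gt R \<rho> x \<and> b \<in> uminus ` pos_lt R \<rho> x}
   \<union> {(a, b). a \<in> uminus ` pos_lt R \<rho> x \<and> b \<in> uminus ` pos_eq R \<rho> x}
   \<union> {(a, b). a \<in> pos_gt R \<rho> x \<and> b \<in> uminus ` pos_eq R \<rho> x}
   \<union> {(a, b). a \<in> pos_gt R \<rho> x \<and> b \<in> pos_gt R \<rho> x \<and> (a, b) \<in> r}
   \<union> {(a, b). a \<in> uminus ` pos_lt R \<rho> x \<and> b \<in> uminus ` pos_lt R \<rho> x \<and> (-a, -b) \<in> r}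
   \<union> {(a, b). a \<in> uminus ` pos_eq R \<rho> x \<and> b \<in> uminus ` pos_eq R \<rho> x \<and> (-a, -b) \<in> r}"

end

theory Submission
  imports Defs
begin

text \<open>
  The element \<open>w(\<lambda>)\<close> is the unique \<open>t\<close> with \<open>t \<lambda>\<^sub>+ = \<lambda>\<close> that sends every positive root
  orthogonal to \<open>\<lambda>\<^sub>+\<close> to a negative root (every other element of the coset lies below
  such a \<open>t\<close> in the Bruhat order, and \<open>t\<close> is determined by \<open>t \<Delta>\<^sup>+\<close>). Since
  \<open>\<langle>\<lambda>, t \<alpha>\<^sup>\<or>\<rangle> = \<langle>\<lambda>\<^sub>+, \<alpha>\<^sup>\<or>\<rangle> \<ge> 0\<close>, this gives
  \<open>w(\<lambda>) \<Delta>\<^sup>+ = \<Delta>\<^sup>+(\<lambda>)\<^sub>>\<^sub>0 \<union> -\<Delta>\<^sup>+(\<lambda>)\<^sub><\<^sub>0 \<union> -\<Delta>\<^sup>+(\<lambda>)\<^sub>=\<^sub>0\<close> by counting.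

  Now \<open>I = \<Delta>\<^sup>+(\<lambda>)\<^sub><\<^sub>0 \<union> \<Delta>\<^sup>+(\<lambda>)\<^sub>=\<^sub>0\<close> is an initial segment of every \<open>\<lhd>\<close> in
  \<open>RO(\<lambda>, \<Delta>\<^sup>+)\<close>, and \<open>\<prec>\<^sub>\<lhd>\<close> is obtained from \<open>\<lhd>\<close> by moving \<open>I\<close>, negated, to the end.
  For any set \<open>S\<close> in an open half-space such a rotation turns a reflection order on \<open>S\<close>
  into one on \<open>(S - I) \<union> -I\<close>: a sum \<open>\<alpha> + \<beta>\<close> with \<open>\<alpha> \<in> S - I\<close>, \<open>-\<beta> \<in> I\<close> is placed
  correctly by applying the reflection order property of \<open>\<lhd>\<close> to one of the relations
  \<open>(\<alpha> + \<beta>) + (-\<beta>) = \<alpha>\<close> or \<open>\<alpha> + (-(\<alpha> + \<beta>)) = -\<beta>\<close> in \<open>S\<close>. Rotating the reversed order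
  of an element of \<open>RO(\<lambda>, w(\<lambda>)\<Delta>\<^sup>+)\<close> at its final segment \<open>-I\<close> gives the inverse map.
\<close>

section \<open>Reflections\<close>

lemma cpair_pos_iff: "a \<noteq> 0 \<Longrightarrow> 0 < cpair x a \<longleftrightarrow> 0 < x \<bullet> a"
  by (simp add: cpair_def pos_less_divide_eq)

lemma cpair_neg_iff: "a \<noteq> 0 \<Longrightarrow> cpair x a < 0 \<longleftrightarrow> x \<bullet> a < 0"
  by (simp add: cpair_def pos_divide_less_eq)

lemma cpair_eq_0_iff: "cpair x a = 0 \<longleftrightarrow> x \<bullet> a = 0"
  by (auto simp: cpair_def)

lemma cpair_nonneg_iff: "a \<noteq> 0 \<Longrightarrow> 0 \<le> cpair x a \<longleftrightarrow> 0 \<le> x \<bullet> a"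
  by (simp add: cpair_def pos_le_divide_eq)

lemma refl_map_self: "a \<noteq> 0 \<Longrightarrow> refl_map a a = - a"
  by (simp add: refl_map_def cpair_def scaleR_2)

lemma refl_map_refl_map: "a \<noteq> 0 \<Longrightarrow> refl_map a (refl_map a x) = x"
  by (simp add: refl_map_def cpair_def inner_diff_left algebra_simps)

lemma refl_map_uminus: "refl_map (- a) = refl_map a"
  by (rule ext) (simp add: refl_map_def cpair_def)

lemma orthogonal_transformation_refl_map:
  assumes "a \<noteq> 0" shows "orthogonal_transformation (refl_map a)"
  unfolding orthogonal_transformation_def
proof (intro conjI allI linearI)
  show "refl_map a (x + y) = refl_map a x + refl_map a y" for x y
    by (simp add: refl_map_def cpair_def inner_add_left add_divide_distrib algebra_simps scaleR_add_left)
  show "refl_map a (c *\<^sub>R x) = c *\<^sub>R refl_map a x" for c x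
    by (simp add: refl_map_def cpair_def algebra_simps)
  show "refl_map a x \<bullet> refl_map a y = x \<bullet> y" for x y
    using assms
    by (simp add: refl_map_def cpair_def inner_diff_left inner_diff_right algebra_simps power2_eq_square)
       (simp add: field_simps inner_commute)
qed

lemma cpair_orthogonal_transformation:
  "orthogonal_transformation w \<Longrightarrow> cpair (w x) (w a) = cpair x a"
  by (simp add: orthogonal_transformation_def cpair_def)

lemma refl_map_orthogonal_transformation:
  "orthogonal_transformation w \<Longrightarrow> refl_map (w a) (w x) = w (refl_map a x)"
  by (simp add: refl_map_def cpair_orthogonal_transformation orthogonal_transformation_def
      linear_diff linear_scale)

definition refl_word :: "'a::euclidean_space list \<Rightarrow> 'a \<Rightarrow> 'a" where
  "refl_word l = foldr (\<lambda>a f. refl_map a \<circ> f) l id"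

lemma refl_word_Nil [simp]: "refl_word [] = id"
  by (simp add: refl_word_def)

lemma refl_word_Cons [simp]: "refl_word (a # l) = refl_map a \<circ> refl_word l"
  by (simp add: refl_word_def)

lemma refl_word_append: "refl_word (l1 @ l2) = refl_word l1 \<circ> refl_word l2"
  by (induction l1) (auto simp: comp_assoc)

lemma refl_word_rev_inverse:
  assumes "0 \<notin> set l"
  shows "refl_word (rev l) (refl_word l x) = x" and "refl_word l (refl_word (rev l) x) = x"
proof -
  have "\<forall>x. refl_word (rev l) (refl_word l x) = x \<and> refl_word l (refl_word (rev l) x) = x"
    using assms by (induction l) (auto simp: refl_word_append refl_map_refl_map)
  then show "refl_word (rev l) (refl_word l x) = x" and "refl_word l (refl_word (rev l) x) = x"
    by auto
qed

lemma orthogonal_transformation_refl_word: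
  "0 \<notin> set l \<Longrightarrow> orthogonal_transformation (refl_word l)"
  by (induction l)
     (auto simp: id_def orthogonal_transformation_refl_map intro: orthogonal_transformation_compose)

lemma refl_map_refl_word:
  assumes "0 \<notin> set l"
  shows "refl_map (refl_word l a) = refl_word l \<circ> refl_map a \<circ> refl_word (rev l)"
proof
  fix y
  have "refl_map (refl_word l a) y = refl_map (refl_word l a) (refl_word l (refl_word (rev l) y))"
    using refl_word_rev_inverse(2)[OF assms] by simp
  also have "\<dots> = refl_word l (refl_map a (refl_word (rev l) y))"
    using refl_map_orthogonal_transformation[OF orthogonal_transformation_refl_word[OF assms]] by simp
  finally show "refl_map (refl_word l a) y = (refl_word l \<circ> refl_map a \<circ> refl_word (rev l)) y"
    by simp
qed

section \<open>Rotating a reflection order\<close>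

text \<open>Moves the initial segment \<open>I\<close> of \<open>r\<close>, negated, to the end of the order.\<close>
definition rotate :: "'a::uminus set \<Rightarrow> 'a set \<Rightarrow> 'a rel \<Rightarrow> 'a rel" where
  "rotate S I r = {(a, b) \<in> r. a \<notin> I \<and> b \<notin> I} \<union> (S - I) \<times> uminus ` I
     \<union> {(a, b). (- a, - b) \<in> r \<and> - a \<in> I \<and> - b \<in> I}"

lemma mem_uminus_image_iff: "(x::'a::group_add) \<in> uminus ` A \<longleftrightarrow> - x \<in> A"
  by (metis image_eqI minus_minus image_iff)

lemma rotate_iff:
  "(a, b) \<in> rotate S I r \<longleftrightarrow> ((a, b) \<in> r \<and> a \<notin> I \<and> b \<notin> I) \<or> (a \<in> S - I \<and> - b \<in> I)
     \<or> ((- a, - b) \<in> r \<and> - a \<in> I \<and> - b \<in> I)"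
  for a b :: "'a::group_add"
  by (auto simp: rotate_def mem_uminus_image_iff)

lemma reflection_order_converse:
  "reflection_order S r \<Longrightarrow> reflection_order S (converse r)"
  unfolding reflection_order_def strict_total_order_on_def
  by (auto simp: total_on_def irrefl_def trans_def)

lemma strict_total_order_on_asym:
  "strict_total_order_on S r \<Longrightarrow> (a, b) \<in> r \<Longrightarrow> (b, a) \<notin> r"
  unfolding strict_total_order_on_def irrefl_def trans_def by blast

lemma strict_total_order_on_rotate:
  fixes S :: "'a::group_add set"
  assumes r: "strict_total_order_on S r" and I: "I \<subseteq> S"
    and init: "\<forall>(a, b)\<in>r. b \<in> I \<longrightarrow> a \<in> I" and disj: "(S - I) \<inter> uminus ` I = {}"
  shows "strict_total_order_on (S - I \<union> uminus ` I) (rotate S I r)"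
  unfolding strict_total_order_on_def
proof (intro conjI)
  have sub: "r \<subseteq> S \<times> S" and irr: "irrefl r" and tr: "trans r" and tot: "total_on S r"
    using r by (auto simp: strict_total_order_on_def)
  have neg: "- a \<in> I \<Longrightarrow> a \<notin> S - I" for a
    using disj by (auto simp: mem_uminus_image_iff)
  show "rotate S I r \<subseteq> (S - I \<union> uminus ` I) \<times> (S - I \<union> uminus ` I)"
    using sub by (auto simp: rotate_iff mem_uminus_image_iff)
  show "irrefl (rotate S I r)"
    using irr neg by (auto simp: irrefl_def rotate_iff)
  show "trans (rotate S I r)"
  proof (rule transI)
    fix a b c assume "(a, b) \<in> rotate S I r" "(b, c) \<in> rotate S I r"
    then show "(a, c) \<in> rotate S I r"
      unfolding rotate_iff using neg sub transD[OF tr] by blast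
  qed
  show "total_on (S - I \<union> uminus ` I) (rotate S I r)"
  proof (rule total_onI)
    fix a b assume "a \<in> S - I \<union> uminus ` I" "b \<in> S - I \<union> uminus ` I" "a \<noteq> b"
    then have "a \<in> S - I \<or> - a \<in> I" "b \<in> S - I \<or> - b \<in> I" "- a \<noteq> - b"
      by (auto simp: mem_uminus_image_iff)
    moreover have "x \<in> S \<Longrightarrow> y \<in> S \<Longrightarrow> x \<noteq> y \<Longrightarrow> (x, y) \<in> r \<or> (y, x) \<in> r" for x y
      using tot by (auto simp: total_on_def)
    ultimately show "(a, b) \<in> rotate S I r \<or> (b, a) \<in> rotate S I r"
      using I \<open>a \<noteq> b\<close> unfolding rotate_iff by blast
  qed
qed

definition between :: "'a rel \<Rightarrow> 'a \<Rightarrow> 'a \<Rightarrow> 'a \<Rightarrow> bool" where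
  "between r a c b \<longleftrightarrow> ((a, c) \<in> r \<and> (c, b) \<in> r) \<or> ((b, c) \<in> r \<and> (c, a) \<in> r)"

lemma between_commute: "between r a c b \<longleftrightarrow> between r b c a"
  by (auto simp: between_def)

lemma reflection_order_between:
  "reflection_order S r \<longleftrightarrow>
     strict_total_order_on S r \<and> (\<forall>a\<in>S. \<forall>b\<in>S. a + b \<in> S \<longrightarrow> between r a (a + b) b)"
  by (simp add: reflection_order_def between_def)

lemma half_space_disjoint_uminus:
  fixes S :: "'a::real_inner set"
  assumes "\<forall>x\<in>S. 0 < x \<bullet> v" and "I \<subseteq> S"
  shows "(S - I) \<inter> uminus ` I = {}"
  using assms by (auto simp: mem_uminus_image_iff) (metis inner_minus_left neg_0_less_iff_less order.asym subsetD)

lemma between_rotate_mixed: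
  assumes r: "reflection_order S r" and I: "I \<subseteq> S" and init: "\<forall>(a, b)\<in>r. b \<in> I \<longrightarrow> a \<in> I"
    and a: "a \<in> S - I" and b: "- b \<in> I" and ab: "a + b \<in> S - I \<union> uminus ` I"
  shows "between (rotate S I r) a (a + b) b"
proof -
  have btw: "x \<in> S \<Longrightarrow> y \<in> S \<Longrightarrow> x + y \<in> S \<Longrightarrow> between r x (x + y) y" for x y
    using r by (simp add: reflection_order_between)
  have not_before: "(a, - b) \<notin> r" using init a b by auto
  show ?thesis
  proof (cases "a + b \<in> S - I")
    case True
    have "between r (a + b) a (- b)" using btw[of "a + b" "- b"] True a b I by auto
    then have "(a, a + b) \<in> r" using not_before by (auto simp: between_def)
    then show ?thesis using True a b by (auto simp: between_def rotate_iff)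
  next
    case False
    then have ab': "- (a + b) \<in> I" using ab by (auto simp: mem_uminus_image_iff)
    have "between r a (- b) (- (a + b))" using btw[of a "- (a + b)"] a b ab' I by auto
    then have "(- (a + b), - b) \<in> r" using not_before by (auto simp: between_def)
    then show ?thesis using a b ab' by (auto simp: between_def rotate_iff)
  qed
qed

lemma reflection_order_rotate:
  fixes S :: "'a::euclidean_space set"
  assumes r: "reflection_order S r" and I: "I \<subseteq> S"
    and init: "\<forall>(a, b)\<in>r. b \<in> I \<longrightarrow> a \<in> I" and half: "\<forall>x\<in>S. 0 < x \<bullet> v"
  shows "reflection_order (S - I \<union> uminus ` I) (rotate S I r)"
proof -
  let ?S' = "S - I \<union> uminus ` I" and ?q = "rotate S I r"
  have sto: "strict_total_order_on S r" and btw: "\<And>a b. a \<in> S \<Longrightarrow> b \<in> S \<Longrightarrow> a + b \<in> S \<Longrightarrow> between r a (a + b) b"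
    using r by (auto simp: reflection_order_between)
  have no_zero_sum: "- (a + b) \<notin> S" if "a \<in> S" "b \<in> S" for a b
  proof
    assume "- (a + b) \<in> S"
    with that half have "0 < a \<bullet> v" "0 < b \<bullet> v" "0 < - (a + b) \<bullet> v" by auto
    then show False by (simp add: inner_diff_left)
  qed
  have disj: "(S - I) \<inter> uminus ` I = {}"
    using half_space_disjoint_uminus[OF half I] .
  show ?thesis
    unfolding reflection_order_between
  proof (intro conjI ballI impI)
    show "strict_total_order_on ?S' ?q"
      using strict_total_order_on_rotate[OF sto I init disj] .
  next
    fix a b assume a: "a \<in> ?S'" and b: "b \<in> ?S'" and ab: "a + b \<in> ?S'"
    then consider "a \<in> S - I" "b \<in> S - I" | "- a \<in> I" "- b \<in> I" | "a \<in> S - I" "- b \<in> I"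
      | "- a \<in> I" "b \<in> S - I"
      by (auto simp: mem_uminus_image_iff)
    then show "between ?q a (a + b) b"
    proof cases
      case 1
      then have "a + b \<in> S - I" using ab no_zero_sum[of a b] I by (auto simp: mem_uminus_image_iff)
      then show ?thesis using 1 btw[of a b] by (auto simp: between_def rotate_iff)
    next
      case 2
      then have "- (a + b) \<in> I" using ab no_zero_sum[of "- a" "- b"] I by (auto simp: mem_uminus_image_iff add.commute)
      moreover have "between r (- a) (- (a + b)) (- b)" using btw[of "- a" "- b"] 2 calculation I by auto
      ultimately show ?thesis using 2 by (auto simp: between_def rotate_iff)
    next
      case 3
      then show ?thesis using between_rotate_mixed[OF r I init] ab by blast
    next
      case 4
      then show ?thesis using between_rotate_mixed[OF r I init, of b a] ab
        by (simp add: add.commute between_commute)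
    qed
  qed
qed

lemma converse_rotate_rotate:
  fixes S :: "'a::group_add set"
  assumes r: "strict_total_order_on S r" and I: "I \<subseteq> S"
    and init: "\<forall>(a, b)\<in>r. b \<in> I \<longrightarrow> a \<in> I" and disj: "(S - I) \<inter> uminus ` I = {}"
  shows "converse (rotate (S - I \<union> uminus ` I) (uminus ` I) (converse (rotate S I r))) = r"
proof -
  have sub: "r \<subseteq> S \<times> S" using r by (simp add: strict_total_order_on_def)
  have neg: "- a \<in> I \<Longrightarrow> a \<notin> S - I" for a
    using disj by (auto simp: mem_uminus_image_iff)
  define q where "q = rotate S I r"
  have "(a, b) \<in> r" if "(b, a) \<in> rotate (S - I \<union> uminus ` I) (uminus ` I) (converse q)" for a b
  proof -
    from that consider "(a, b) \<in> q" "- a \<notin> I" "- b \<notin> I" | "a \<in> I" "b \<in> S - I"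
      | "(- a, - b) \<in> q" "a \<in> I" "b \<in> I"
      by (auto simp only: converse_iff rotate_iff mem_uminus_image_iff minus_minus)
    then show ?thesis
    proof cases
      case 1
      then show ?thesis by (auto simp: q_def rotate_iff)
    next
      case 2
      then have "a \<in> S" "a \<noteq> b" using I by auto
      then have "(a, b) \<in> r \<or> (b, a) \<in> r"
        using r 2 unfolding strict_total_order_on_def total_on_def by blast
      then show ?thesis using init 2 by auto
    next
      case 3
      have "- a \<notin> S - I" using neg[of "- a"] 3 by simp
      moreover have "(- a, - b) \<in> r \<Longrightarrow> - a \<in> S" using sub by auto
      ultimately show ?thesis using 3 unfolding q_def rotate_iff by auto
    qed
  qed
  moreover have "(b, a) \<in> rotate (S - I \<union> uminus ` I) (uminus ` I) (converse q)" if ab: "(a, b) \<in> r" for a b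
  proof -
    have a: "a \<in> S" and b: "b \<in> S" using ab sub by auto
    show ?thesis
    proof (cases "a \<in> I")
      case False
      then have "b \<notin> I" using ab init by auto
      then have "(a, b) \<in> q" "- a \<notin> I" "- b \<notin> I" using ab a b \<open>a \<notin> I\<close> neg
        by (auto simp: q_def rotate_iff)
      then show ?thesis by (simp add: rotate_iff mem_uminus_image_iff)
    next
      case True
      show ?thesis
      proof (cases "b \<in> I")
        case False
        then have "b \<in> S - I" "b \<notin> uminus ` I" using b neg by (auto simp: mem_uminus_image_iff)
        then show ?thesis using True by (simp add: rotate_iff)
      next
        case True
        then have "(- a, - b) \<in> q" using ab \<open>a \<in> I\<close> by (simp add: q_def rotate_iff)
        then show ?thesis using True \<open>a \<in> I\<close> by (simp add: rotate_iff)
      qed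
    qed
  qed
  ultimately show ?thesis unfolding q_def by auto
qed

section \<open>Positive systems and simple roots\<close>

locale positive_system =
  fixes R :: "'a::euclidean_space set" and \<rho> :: 'a
  assumes root_system: "root_system R" and regular: "regular_vec R \<rho>"
begin

abbreviation Pos :: "'a set" where
  "Pos \<equiv> pos_roots R \<rho>"

lemma finite_roots: "finite R"
  using root_system by (simp add: root_system_def)

lemma root_nonzero: "a \<in> R \<Longrightarrow> a \<noteq> 0"
  using root_system by (auto simp: root_system_def)

lemma refl_map_root: "a \<in> R \<Longrightarrow> b \<in> R \<Longrightarrow> refl_map a b \<in> R"
  using root_system by (simp add: root_system_def)

lemma cpair_root_Ints: "a \<in> R \<Longrightarrow> b \<in> R \<Longrightarrow> cpair b a \<in> \<int>"
  using root_system by (simp add: root_system_def)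

lemma root_multiple: "a \<in> R \<Longrightarrow> c *\<^sub>R a \<in> R \<Longrightarrow> c = 1 \<or> c = -1"
  using root_system by (simp add: root_system_def)

lemma uminus_root_iff [simp]: "- a \<in> R \<longleftrightarrow> a \<in> R"
  using refl_map_root[of a a] refl_map_root[of "- a" "- a"] refl_map_self root_nonzero
  by (metis minus_minus)

lemma pos_roots_iff: "a \<in> Pos \<longleftrightarrow> a \<in> R \<and> 0 < a \<bullet> \<rho>"
  by (simp add: pos_roots_def)

lemma pos_root: "a \<in> Pos \<Longrightarrow> a \<in> R"
  by (simp add: pos_roots_iff)

lemma root_notin_pos_iff: "a \<in> R \<Longrightarrow> a \<notin> Pos \<longleftrightarrow> - a \<in> Pos"
  using regular by (auto simp: regular_vec_def pos_roots_iff)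

lemma finite_pos_roots: "finite Pos"
  using finite_roots by (simp add: pos_roots_def)

lemma pos_root_induct [consumes 1, case_names less]:
  assumes "b \<in> Pos"
    and step: "\<And>b. b \<in> Pos \<Longrightarrow> (\<And>c. c \<in> Pos \<Longrightarrow> c \<bullet> \<rho> < b \<bullet> \<rho> \<Longrightarrow> Q c) \<Longrightarrow> Q b"
  shows "Q b"
proof -
  have "Q b" if "card {c\<in>Pos. c \<bullet> \<rho> < b \<bullet> \<rho>} = n" "b \<in> Pos" for n b
    using that
  proof (induction n arbitrary: b rule: less_induct)
    case (less n b)
    show ?case
    proof (rule step[OF less.prems(2)])
      fix c assume c: "c \<in> Pos" "c \<bullet> \<rho> < b \<bullet> \<rho>"
      then have "{x\<in>Pos. x \<bullet> \<rho> < c \<bullet> \<rho>} \<subset> {x\<in>Pos. x \<bullet> \<rho> < b \<bullet> \<rho>}"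
        by auto
      then have "card {x\<in>Pos. x \<bullet> \<rho> < c \<bullet> \<rho>} < card {x\<in>Pos. x \<bullet> \<rho> < b \<bullet> \<rho>}"
        by (rule psubset_card_mono[rotated]) (simp add: finite_pos_roots)
      then have "card {x\<in>Pos. x \<bullet> \<rho> < c \<bullet> \<rho>} < n"
        using less.prems(1) by simp
      then show "Q c" using less.IH c(1) by blast
    qed
  qed
  then show ?thesis using assms(1) by blast
qed

definition simple_roots :: "'a set" where
  "simple_roots = {a\<in>Pos. \<nexists>b c. b \<in> Pos \<and> c \<in> Pos \<and> a = b + c}"

lemma simple_pos: "a \<in> simple_roots \<Longrightarrow> a \<in> Pos"
  by (simp add: simple_roots_def)

lemma simple_root: "a \<in> simple_roots \<Longrightarrow> a \<in> R"
  by (simp add: simple_roots_def pos_root)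

lemma finite_simple_roots: "finite simple_roots"
  using finite_pos_roots by (rule finite_subset[rotated]) (auto simp: simple_roots_def)

text \<open>Two roots at an acute angle have Cartan integers
  \<open>m, n \<ge> 1\<close> with \<open>m n \<le> 4\<close> (Cauchy--Schwarz), so one of them is \<open>1\<close> unless \<open>a = b\<close>.\<close>
lemma root_diff:
  assumes a: "a \<in> R" and b: "b \<in> R" and ab: "0 < a \<bullet> b" and ne: "a \<noteq> b"
  shows "a - b \<in> R"
proof -
  obtain m where m: "cpair a b = of_int m" using cpair_root_Ints[OF b a] Ints_cases by metis
  obtain n where n: "cpair b a = of_int n" using cpair_root_Ints[OF a b] Ints_cases by metis
  have aa: "0 < a \<bullet> a" and bb: "0 < b \<bullet> b" using a b root_nonzero by auto
  have "0 < cpair a b" "0 < cpair b a"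
    using ab root_nonzero a b by (simp_all add: cpair_pos_iff inner_commute)
  then have "1 \<le> m" "1 \<le> n" using m n by simp_all
  moreover have "m * n \<le> 4"
  proof -
    have "cpair a b * cpair b a = 4 * (a \<bullet> b)^2 / ((a \<bullet> a) * (b \<bullet> b))"
      using aa bb by (simp add: cpair_def inner_commute power2_eq_square field_simps)
    also have "\<dots> \<le> 4"
      using Cauchy_Schwarz_ineq[of a b] aa bb by (simp add: divide_le_eq)
    finally show ?thesis using m n by (simp flip: of_int_mult)
  qed
  ultimately consider "m = 1" | "n = 1" | "m = 2" "n = 2"
  proof (cases "m = 1 \<or> n = 1")
    case False
    then have "2 \<le> m" "2 \<le> n" using \<open>1 \<le> m\<close> \<open>1 \<le> n\<close> by auto
    then have "2 * n \<le> m * n" by (simp add: mult_right_mono)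
    then have "n = 2" using \<open>m * n \<le> 4\<close> \<open>2 \<le> n\<close> by linarith
    then have "m = 2" using \<open>m * n \<le> 4\<close> \<open>2 \<le> m\<close> by simp
    then show ?thesis using that \<open>n = 2\<close> by blast
  qed (use that in blast)
  then show ?thesis
  proof cases
    case 1
    then have "refl_map b a = a - b" using m by (simp add: refl_map_def)
    then show ?thesis using refl_map_root[OF b a] by simp
  next
    case 2
    then have "refl_map a b = - (a - b)" using n by (simp add: refl_map_def)
    then show ?thesis using refl_map_root[OF a b] by (metis uminus_root_iff)
  next
    case 3
    then have "a \<bullet> b = b \<bullet> b" "a \<bullet> b = a \<bullet> a" using m n aa bb
      by (auto simp: cpair_def inner_commute field_simps)
    then have "(a - b) \<bullet> (a - b) = 0" by (simp add: inner_diff_left inner_diff_right inner_commute)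
    then show ?thesis using ne by simp
  qed
qed

lemma simple_roots_inner_nonpos:
  assumes d1: "d1 \<in> simple_roots" and d2: "d2 \<in> simple_roots" and "d1 \<noteq> d2"
  shows "d1 \<bullet> d2 \<le> 0"
proof (rule ccontr)
  assume "\<not> d1 \<bullet> d2 \<le> 0"
  then have diff: "d1 - d2 \<in> R" using assms root_diff simple_root by simp
  consider "d1 - d2 \<in> Pos" | "d2 - d1 \<in> Pos"
    using root_notin_pos_iff[OF diff] by fastforce
  then show False
  proof cases
    case 1
    then have "d1 = d2 + (d1 - d2)" "d2 \<in> Pos" using d2 simple_pos by auto
    then show False using d1 1 unfolding simple_roots_def by blast
  next
    case 2
    then have "d2 = d1 + (d2 - d1)" "d1 \<in> Pos" using d1 simple_pos by auto
    then show False using d2 2 unfolding simple_roots_def by blast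
  qed
qed

lemma pos_root_simple_combination:
  assumes "b \<in> Pos"
  shows "\<exists>k. (\<forall>d\<in>simple_roots. 0 \<le> k d) \<and> b = (\<Sum>d\<in>simple_roots. k d *\<^sub>R d)"
  using assms
proof (induction rule: pos_root_induct)
  case (less b)
  show ?case
  proof (cases "b \<in> simple_roots")
    case True
    show ?thesis
      by (rule exI[of _ "\<lambda>d. if d = b then 1 else 0"])
         (simp add: if_distrib[of "\<lambda>x. x *\<^sub>R _"] sum.delta[OF finite_simple_roots] True cong: if_cong)
  next
    case False
    then obtain b1 b2 where b12: "b1 \<in> Pos" "b2 \<in> Pos" "b = b1 + b2"
      using less.hyps unfolding simple_roots_def by blast
    then have "b1 \<bullet> \<rho> < b \<bullet> \<rho>" "b2 \<bullet> \<rho> < b \<bullet> \<rho>"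
      by (auto simp: pos_roots_iff inner_add_left)
    then obtain k1 k2
      where "\<forall>d\<in>simple_roots. 0 \<le> k1 d" "b1 = (\<Sum>d\<in>simple_roots. k1 d *\<^sub>R d)"
        and "\<forall>d\<in>simple_roots. 0 \<le> k2 d" "b2 = (\<Sum>d\<in>simple_roots. k2 d *\<^sub>R d)"
      using less.IH b12 by meson
    then show ?thesis
      by (intro exI[of _ "\<lambda>d. k1 d + k2 d"]) (simp add: b12 scaleR_add_left sum.distrib)
  qed
qed


lemma refl_map_simple_pos:
  assumes a: "a \<in> simple_roots" and b: "b \<in> Pos" and ne: "b \<noteq> a"
  shows "refl_map a b \<in> Pos"
proof (rule ccontr)
  assume "refl_map a b \<notin> Pos"
  then have "- refl_map a b \<in> Pos"
    using root_notin_pos_iff[OF refl_map_root[OF simple_root[OF a] pos_root[OF b]]] by simp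
  then obtain m where m: "\<forall>d\<in>simple_roots. 0 \<le> m d" "- refl_map a b = (\<Sum>d\<in>simple_roots. m d *\<^sub>R d)"
    using pos_root_simple_combination by blast
  obtain k where k: "\<forall>d\<in>simple_roots. 0 \<le> k d" "b = (\<Sum>d\<in>simple_roots. k d *\<^sub>R d)"
    using pos_root_simple_combination[OF b] by blast
  define X where "X = (\<Sum>d\<in>simple_roots - {a}. (k d + m d) *\<^sub>R d)"
  have "cpair b a *\<^sub>R a = b + - refl_map a b" by (simp add: refl_map_def)
  also have "\<dots> = (\<Sum>d\<in>simple_roots. k d *\<^sub>R d) + (\<Sum>d\<in>simple_roots. m d *\<^sub>R d)"
    by (simp only: k(2)[symmetric] m(2)[symmetric])
  also have "\<dots> = (\<Sum>d\<in>simple_roots. (k d + m d) *\<^sub>R d)"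
    by (simp add: scaleR_add_left sum.distrib)
  also have "\<dots> = (k a + m a) *\<^sub>R a + X"
    unfolding X_def using a finite_simple_roots by (simp add: sum.remove)
  finally have X: "X = (cpair b a - (k a + m a)) *\<^sub>R a"
    by (simp add: algebra_simps)
  \<comment> \<open>\<open>X\<close> is a nonzero nonnegative combination of simple roots other than \<open>a\<close>:
    it has positive height but nonpositive inner product with \<open>a\<close>.\<close>
  have "\<exists>d0\<in>simple_roots - {a}. 0 < k d0"
  proof (rule ccontr)
    assume "\<not> ?thesis"
    then have "\<forall>d\<in>simple_roots - {a}. k d = 0" using k by force
    then have "b = k a *\<^sub>R a"
      using k a finite_simple_roots by (simp add: sum.remove)
    moreover have "k a \<noteq> -1" using k a by force
    ultimately have "b = a"
      using root_multiple[of a "k a"] simple_root[OF a] pos_root[OF b] by auto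
    then show False using ne by simp
  qed
  then obtain d0 where d0: "d0 \<in> simple_roots - {a}" "0 < k d0" by blast
  have "0 < X \<bullet> \<rho>"
  proof -
    have "X \<bullet> \<rho> = (\<Sum>d\<in>simple_roots - {a}. (k d + m d) * (d \<bullet> \<rho>))"
      by (simp add: X_def inner_sum_left)
    also have "0 < \<dots>"
    proof (rule sum_pos2[OF _ d0(1)])
      show "0 < (k d0 + m d0) * (d0 \<bullet> \<rho>)"
        using d0 k m simple_pos[of d0] by (intro mult_pos_pos add_pos_nonneg) (auto simp: pos_roots_iff)
      show "0 \<le> (k d + m d) * (d \<bullet> \<rho>)" if "d \<in> simple_roots - {a}" for d
        using that k m simple_pos[of d] by (auto simp: pos_roots_iff)
    qed (use finite_simple_roots in auto)
    finally show ?thesis .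
  qed
  then have pos: "0 < cpair b a - (k a + m a)"
    using X simple_pos[OF a] by (auto simp: pos_roots_iff zero_less_mult_iff)
  have "X \<bullet> a = (\<Sum>d\<in>simple_roots - {a}. (k d + m d) * (d \<bullet> a))"
    by (simp add: X_def inner_sum_left)
  also have "\<dots> \<le> 0"
    using k m simple_roots_inner_nonpos a by (intro sum_nonpos) (auto intro!: mult_nonneg_nonpos)
  finally have "(cpair b a - (k a + m a)) * (a \<bullet> a) \<le> 0" by (simp add: X)
  moreover have "0 < a \<bullet> a" using root_nonzero[OF simple_root[OF a]] by simp
  ultimately show False using pos by (simp add: mult_le_0_iff)
qed

lemma pos_root_inner_simple_pos:
  assumes "b \<in> Pos" shows "\<exists>d\<in>simple_roots. 0 < b \<bullet> d"
proof (rule ccontr)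
  assume "\<not> ?thesis"
  then have nonpos: "\<forall>d\<in>simple_roots. b \<bullet> d \<le> 0" by auto
  obtain k where k: "\<forall>d\<in>simple_roots. 0 \<le> k d" "b = (\<Sum>d\<in>simple_roots. k d *\<^sub>R d)"
    using pos_root_simple_combination[OF assms] by blast
  have "b \<bullet> b = (\<Sum>d\<in>simple_roots. k d * (b \<bullet> d))"
    by (subst (2) k(2)) (simp add: inner_sum_right)
  also have "\<dots> \<le> 0" using k nonpos by (intro sum_nonpos) (auto intro!: mult_nonneg_nonpos)
  finally have "b \<bullet> b \<le> 0" .
  moreover have "0 < b \<bullet> b" using root_nonzero[OF pos_root[OF assms]] by simp
  ultimately show False by linarith
qed

lemma pos_root_support:
  assumes b: "b \<in> Pos" and mu: "\<forall>d\<in>simple_roots. 0 \<le> mu \<bullet> d" and mub: "mu \<bullet> b = 0"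
    and f: "linear (f :: 'a \<Rightarrow> real)" and fb: "0 < f b"
  shows "\<exists>d\<in>simple_roots. mu \<bullet> d = 0 \<and> 0 < f d"
proof -
  obtain k where k: "\<forall>d\<in>simple_roots. 0 \<le> k d" "b = (\<Sum>d\<in>simple_roots. k d *\<^sub>R d)"
    using pos_root_simple_combination[OF b] by blast
  have "mu \<bullet> b = (\<Sum>d\<in>simple_roots. k d * (mu \<bullet> d))"
    by (subst k(2)) (simp add: inner_sum_right)
  then have "(\<Sum>d\<in>simple_roots. k d * (mu \<bullet> d)) = 0" using mub by simp
  then have zero: "\<forall>d\<in>simple_roots. k d * (mu \<bullet> d) = 0"
    using sum_nonneg_eq_0_iff[OF finite_simple_roots, of "\<lambda>d. k d * (mu \<bullet> d)"] k mu by simp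
  have "f b = (\<Sum>d\<in>simple_roots. k d * f d)"
    by (subst k(2)) (simp add: linear_sum[OF f] linear_scale[OF f])
  then have "\<not> (\<Sum>d\<in>simple_roots. k d * f d) \<le> 0" using fb by simp
  then obtain d where d: "d \<in> simple_roots" "0 < k d * f d"
    using sum_nonpos[of simple_roots "\<lambda>d. k d * f d"] by force
  then have "0 < k d" "0 < f d" using k by (auto simp: zero_less_mult_iff)
  then show ?thesis using zero d by auto
qed


section \<open>The Weyl group\<close>

lemma zero_notin_simple_roots: "0 \<notin> simple_roots"
  using root_nonzero simple_root by blast

lemma weyl_group_orthogonal: "w \<in> weyl_group R \<Longrightarrow> orthogonal_transformation w"
proof (induction rule: weyl_group.induct)
  case weyl_id
  then show ?case by (simp add: id_def)
next
  case (weyl_step w a)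
  then show ?case
    using orthogonal_transformation_compose orthogonal_transformation_refl_map root_nonzero by blast
qed

lemma weyl_group_root: "w \<in> weyl_group R \<Longrightarrow> a \<in> R \<Longrightarrow> w a \<in> R"
  by (induction rule: weyl_group.induct) (auto intro: refl_map_root)

lemma weyl_group_uminus: "w \<in> weyl_group R \<Longrightarrow> w (- x) = - w x"
  using weyl_group_orthogonal orthogonal_transformation_linear linear_neg by blast

lemma weyl_group_comp_refl_map:
  "w \<in> weyl_group R \<Longrightarrow> a \<in> R \<Longrightarrow> w \<circ> refl_map a \<in> weyl_group R"
proof (induction rule: weyl_group.induct)
  case weyl_id
  then show ?case using weyl_group.weyl_step[OF weyl_group.weyl_id, of a R] by simp
next
  case (weyl_step w b)
  then have "refl_map b \<circ> (w \<circ> refl_map a) \<in> weyl_group R" by (intro weyl_group.weyl_step)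
  then show ?case by (simp only: comp_assoc)
qed

lemma refl_word_weyl_group: "set l \<subseteq> R \<Longrightarrow> refl_word l \<in> weyl_group R"
  by (induction l) (auto intro: weyl_group.intros)

lemma pos_root_eq_refl_word_simple:
  assumes "b \<in> Pos"
  shows "\<exists>l a. set l \<subseteq> simple_roots \<and> a \<in> simple_roots \<and> b = refl_word l a"
  using assms
proof (induction rule: pos_root_induct)
  case (less b)
  show ?case
  proof (cases "b \<in> simple_roots")
    case True
    then show ?thesis by (intro exI[of _ "[]"] exI[of _ b]) simp
  next
    case False
    obtain d where d: "d \<in> simple_roots" "0 < b \<bullet> d"
      using pos_root_inner_simple_pos[OF less.hyps] by blast
    have dR: "d \<in> R" using simple_root[OF d(1)] .
    have "refl_map d b \<in> Pos"
      using refl_map_simple_pos[OF d(1) less.hyps] False d(1) by blast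
    moreover have "refl_map d b \<bullet> \<rho> < b \<bullet> \<rho>"
      using d simple_pos[OF d(1)] root_nonzero[OF dR]
      by (simp add: refl_map_def inner_diff_left cpair_pos_iff pos_roots_iff)
    ultimately obtain l a where "set l \<subseteq> simple_roots" "a \<in> simple_roots" "refl_map d b = refl_word l a"
      using less.IH by blast
    moreover have "b = refl_map d (refl_map d b)" using refl_map_refl_map[OF root_nonzero[OF dR]] by simp
    ultimately show ?thesis using d(1) by (intro exI[of _ "d # l"] exI[of _ a]) simp
  qed
qed

lemma refl_map_eq_refl_word:
  assumes "b \<in> R" shows "\<exists>l. set l \<subseteq> simple_roots \<and> refl_map b = refl_word l"
proof -
  have "\<exists>l. set l \<subseteq> simple_roots \<and> refl_map c = refl_word l" if c: "c \<in> Pos" for c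
  proof -
    obtain m a where m: "set m \<subseteq> simple_roots" "a \<in> simple_roots" "c = refl_word m a"
      using pos_root_eq_refl_word_simple[OF c] by blast
    then have "refl_map c = refl_word (m @ [a] @ rev m)"
      using refl_map_refl_word[of m a] zero_notin_simple_roots by (auto simp: refl_word_append comp_assoc)
    then show ?thesis using m by (intro exI[of _ "m @ [a] @ rev m"]) auto
  qed
  moreover have "b \<in> Pos \<or> - b \<in> Pos" using root_notin_pos_iff[OF assms] by blast
  ultimately show ?thesis using refl_map_uminus by metis
qed

lemma weyl_group_eq_refl_word:
  "w \<in> weyl_group R \<Longrightarrow> \<exists>l. set l \<subseteq> simple_roots \<and> w = refl_word l"
proof (induction rule: weyl_group.induct)
  case weyl_id
  then show ?case by (intro exI[of _ "[]"]) simp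
next
  case (weyl_step w b)
  obtain l where "set l \<subseteq> simple_roots" "w = refl_word l" using weyl_step.IH by blast
  moreover obtain m where "set m \<subseteq> simple_roots" "refl_map b = refl_word m"
    using refl_map_eq_refl_word[OF weyl_step.hyps(2)] by blast
  ultimately show ?case by (intro exI[of _ "m @ l"]) (auto simp: refl_word_append)
qed

lemma simple_word_root: "set l \<subseteq> simple_roots \<Longrightarrow> set l \<subseteq> R"
  using simple_root by blast

lemma refl_word_exchange:
  assumes "set l \<subseteq> simple_roots" "a \<in> simple_roots" "refl_word l a \<notin> Pos"
  shows "\<exists>l'. set l' \<subseteq> simple_roots \<and> length l' < length l \<and> refl_word l \<circ> refl_map a = refl_word l'"
  using assms
proof (induction l)
  case Nil
  then show ?case using simple_pos by simp
next
  case (Cons b l)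
  have a0: "a \<noteq> 0" and l0: "0 \<notin> set l" and l: "set l \<subseteq> simple_roots"
    using Cons.prems zero_notin_simple_roots by auto
  show ?case
  proof (cases "refl_word l a \<in> Pos")
    case False
    then obtain l' where l': "set l' \<subseteq> simple_roots" "length l' < length l"
        "refl_word l \<circ> refl_map a = refl_word l'"
      using Cons.IH[OF l Cons.prems(2) False] by blast
    have "refl_word (b # l) \<circ> refl_map a = refl_map b \<circ> (refl_word l \<circ> refl_map a)"
      by (simp only: refl_word_Cons comp_assoc)
    also have "\<dots> = refl_word (b # l')"
      by (simp only: l'(3) refl_word_Cons)
    finally have "refl_word (b # l) \<circ> refl_map a = refl_word (b # l')" .
    moreover have "set (b # l') \<subseteq> simple_roots" "length (b # l') < length (b # l)"
      using l' Cons.prems by auto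
    ultimately show ?thesis by blast
  next
    case True
    \<comment> \<open>The simple reflection \<open>s_b\<close> sends the positive root \<open>refl_word l a\<close> to a negative one,
      so it is \<open>b\<close> itself and \<open>s_b\<close> cancels against the conjugate of \<open>s_a\<close>.\<close>
    have "refl_map b (refl_word l a) \<notin> Pos" using Cons.prems by simp
    then have b: "refl_word l a = b" using refl_map_simple_pos[of b "refl_word l a"] True Cons.prems by auto
    have "refl_word (b # l) \<circ> refl_map a = refl_word l"
    proof
      fix x
      have "(refl_word (b # l) \<circ> refl_map a) x = refl_map (refl_word l a) (refl_word l (refl_map a x))"
        using b by simp
      also have "\<dots> = refl_word l x"
        using refl_map_orthogonal_transformation[OF orthogonal_transformation_refl_word[OF l0]]
          refl_map_refl_map[OF a0] by simp
      finally show "(refl_word (b # l) \<circ> refl_map a) x = refl_word l x" .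
    qed
    moreover have "length l < length (b # l)" by simp
    ultimately show ?thesis using l by blast
  qed
qed

lemma refl_word_eq_id:
  assumes "set l \<subseteq> simple_roots" "\<forall>b\<in>Pos. refl_word l b \<in> Pos"
  shows "refl_word l = id"
  using assms
proof (induction "length l" arbitrary: l rule: less_induct)
  case less
  show ?case
  proof (cases l rule: rev_exhaust)
    case (snoc l0 a)
    have a: "a \<in> simple_roots" and l0: "set l0 \<subseteq> simple_roots" using less.prems snoc by auto
    have rw: "refl_word l = refl_word l0 \<circ> refl_map a" using snoc by (simp add: refl_word_append)
    have "refl_word l a \<in> Pos" using less.prems a simple_pos by auto
    then have "- refl_word l0 a \<in> Pos"
      using rw refl_map_self[OF root_nonzero[OF simple_root[OF a]]]
        weyl_group_uminus[OF refl_word_weyl_group[OF simple_word_root[OF l0]]] by simp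
    then have "refl_word l0 a \<notin> Pos" by (auto simp: pos_roots_iff)
    then obtain l' where "set l' \<subseteq> simple_roots" "length l' < length l0"
        "refl_word l0 \<circ> refl_map a = refl_word l'"
      using refl_word_exchange[OF l0 a] by blast
    then show ?thesis using less.hyps[of l'] less.prems snoc rw by auto
  qed simp
qed

lemma weyl_group_eqI:
  assumes w1: "w1 \<in> weyl_group R" and w2: "w2 \<in> weyl_group R" and img: "w2 ` Pos \<subseteq> w1 ` Pos"
  shows "w1 = w2"
proof -
  obtain l1 where l1: "set l1 \<subseteq> simple_roots" "w1 = refl_word l1"
    using weyl_group_eq_refl_word[OF w1] by blast
  obtain l2 where l2: "set l2 \<subseteq> simple_roots" "w2 = refl_word l2"
    using weyl_group_eq_refl_word[OF w2] by blast
  have inv: "0 \<notin> set l1" using l1 zero_notin_simple_roots by auto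
  have "\<forall>b\<in>Pos. refl_word (rev l1 @ l2) b \<in> Pos"
  proof
    fix b assume "b \<in> Pos"
    then obtain c where "c \<in> Pos" "w2 b = w1 c" using img by blast
    then show "refl_word (rev l1 @ l2) b \<in> Pos"
      using l1 l2 refl_word_rev_inverse(1)[OF inv] by (simp add: refl_word_append)
  qed
  then have "refl_word (rev l1 @ l2) = id" using refl_word_eq_id l1 l2 by auto
  then have "refl_word l1 (refl_word (rev l1) (refl_word l2 x)) = refl_word l1 x" for x
    by (simp add: refl_word_append fun_eq_iff)
  then show ?thesis using refl_word_rev_inverse(2)[OF inv] l1 l2 by auto
qed

lemma weyl_group_comp: "w \<in> weyl_group R \<Longrightarrow> v \<in> weyl_group R \<Longrightarrow> w \<circ> v \<in> weyl_group R"
  by (induction rule: weyl_group.induct) (auto simp: comp_assoc intro: weyl_group.weyl_step)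

lemma weyl_group_inverse:
  assumes "w \<in> weyl_group R" shows "\<exists>v\<in>weyl_group R. v \<circ> w = id"
proof -
  obtain l where l: "set l \<subseteq> simple_roots" "w = refl_word l"
    using weyl_group_eq_refl_word[OF assms] by blast
  then have "refl_word (rev l) \<circ> w = id"
    using refl_word_rev_inverse(1) zero_notin_simple_roots by (auto simp: fun_eq_iff)
  moreover have "refl_word (rev l) \<in> weyl_group R"
    using l by (intro refl_word_weyl_group) (auto simp: simple_root)
  ultimately show ?thesis by blast
qed

lemma finite_weyl_group: "finite (weyl_group R)"
proof -
  have "inj_on (\<lambda>w. restrict w R) (weyl_group R)"
  proof (rule inj_onI)
    fix w1 w2 assume w: "w1 \<in> weyl_group R" "w2 \<in> weyl_group R" "restrict w1 R = restrict w2 R"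
    have "w1 x = w2 x" for x
    proof (rule real_vector.linear_eq_on_span[of w1 w2 R])
      show "linear w1" "linear w2"
        using w weyl_group_orthogonal orthogonal_transformation_linear by auto
      show "\<And>x. x \<in> R \<Longrightarrow> w1 x = w2 x" using w(3) by (metis restrict_apply')
      show "x \<in> span R" using root_system by (simp add: root_system_def)
    qed
    then show "w1 = w2" by auto
  qed
  moreover have "(\<lambda>w. restrict w R) ` weyl_group R \<subseteq> (\<Pi>\<^sub>E i\<in>R. R)" using weyl_group_root by auto
  moreover have "finite (\<Pi>\<^sub>E i\<in>R. R)" using finite_roots by (simp add: finite_PiE)
  ultimately show ?thesis by (metis finite_imageD finite_subset)
qed


section \<open>Length, dominant weights and the element \<open>w(\<lambda>)\<close>\<close>

definition inversions :: "('a \<Rightarrow> 'a) \<Rightarrow> 'a set" where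
  "inversions w = {b\<in>Pos. w b \<notin> Pos}"

lemma wlen_eq_card_inversions: "wlen R \<rho> w = card (inversions w)"
  by (simp add: wlen_def inversions_def)

lemma wlen_le_card_pos_roots: "wlen R \<rho> w \<le> card Pos"
  unfolding wlen_eq_card_inversions inversions_def using finite_pos_roots by (intro card_mono) auto

lemma wlen_comp_refl_map_simple:
  assumes a: "a \<in> simple_roots" and v: "v \<in> weyl_group R" and va: "v a \<in> Pos"
  shows "wlen R \<rho> (v \<circ> refl_map a) = Suc (wlen R \<rho> v)"
proof -
  have a0: "a \<noteq> 0" using a zero_notin_simple_roots by blast
  note inv = refl_map_refl_map[OF a0] and self = refl_map_self[OF a0]
  have "inversions (v \<circ> refl_map a) = insert a (refl_map a ` inversions v)"
  proof (intro equalityI subsetI)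
    fix b assume "b \<in> inversions (v \<circ> refl_map a)"
    then have b: "b \<in> Pos" "v (refl_map a b) \<notin> Pos" by (auto simp: inversions_def)
    show "b \<in> insert a (refl_map a ` inversions v)"
    proof (cases "b = a")
      case False
      then have "refl_map a b \<in> inversions v"
        using refl_map_simple_pos[OF a b(1)] b by (simp add: inversions_def)
      then show ?thesis using inv[of b] by (metis image_eqI insertI2)
    qed simp
  next
    fix b assume "b \<in> insert a (refl_map a ` inversions v)"
    then show "b \<in> inversions (v \<circ> refl_map a)"
    proof
      assume "b = a"
      then show ?thesis
        using va a simple_pos weyl_group_uminus[OF v] self by (auto simp: inversions_def pos_roots_iff)
    next
      assume "b \<in> refl_map a ` inversions v"
      then obtain c where c: "c \<in> Pos" "v c \<notin> Pos" "b = refl_map a c" by (auto simp: inversions_def)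
      then have "b \<in> Pos" using refl_map_simple_pos[OF a c(1)] va by auto
      then show ?thesis using c inv by (simp add: inversions_def)
    qed
  qed
  moreover have "a \<notin> refl_map a ` inversions v"
  proof
    assume "a \<in> refl_map a ` inversions v"
    then obtain c where "c \<in> Pos" "a = refl_map a c" by (auto simp: inversions_def)
    then have "c = - a" using inv self by metis
    then show False using \<open>c \<in> Pos\<close> simple_pos[OF a] by (auto simp: pos_roots_iff)
  qed
  moreover have "inj_on (refl_map a) (inversions v)" using inv by (metis inj_onI)
  moreover have "finite (inversions v)" using finite_pos_roots by (simp add: inversions_def)
  ultimately show ?thesis by (simp add: wlen_eq_card_inversions card_image)
qed

lemma wlen_eq_0_imp_id:
  assumes "w \<in> weyl_group R" and "wlen R \<rho> w = 0" shows "w = id"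
proof -
  have "inversions w = {}"
    using assms(2) finite_pos_roots by (simp add: wlen_eq_card_inversions inversions_def)
  then have "w ` Pos \<subseteq> id ` Pos" by (auto simp: inversions_def)
  then show ?thesis using weyl_group_eqI[OF weyl_group.weyl_id assms(1)] by simp
qed

lemma bruhat_le_wlen: "bruhat_le R \<rho> u v \<Longrightarrow> u = v \<or> wlen R \<rho> u < wlen R \<rho> v"
  unfolding bruhat_le_def
proof (induction rule: rtranclp_induct)
  case (step y z)
  then show ?case by (auto simp: bruhat_step_def)
qed simp

lemma bruhat_le_antisym: "bruhat_le R \<rho> u v \<Longrightarrow> bruhat_le R \<rho> v u \<Longrightarrow> u = v"
  using bruhat_le_wlen[of u v] bruhat_le_wlen[of v u] by auto

lemma dominant_iff: "dominant R \<rho> x \<longleftrightarrow> (\<forall>a\<in>Pos. 0 \<le> x \<bullet> a)"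
  using root_nonzero pos_root by (auto simp: dominant_def cpair_nonneg_iff)

abbreviation orbit :: "'a \<Rightarrow> 'a set" where
  "orbit x \<equiv> (\<lambda>w. w x) ` weyl_group R"

lemma dominant_in_orbit: "\<exists>mu\<in>orbit x. dominant R \<rho> mu"
proof -
  \<comment> \<open>A point of the orbit of maximal height is dominant.\<close>
  have fin: "finite (orbit x)" and ne: "orbit x \<noteq> {}"
    using finite_weyl_group weyl_group.weyl_id by auto
  define m where "m = Max ((\<lambda>y. y \<bullet> \<rho>) ` orbit x)"
  obtain mu where mu: "mu \<in> orbit x" "mu \<bullet> \<rho> = m"
    using Max_in[of "(\<lambda>y. y \<bullet> \<rho>) ` orbit x"] fin ne unfolding m_def by fastforce
  have max: "y \<bullet> \<rho> \<le> mu \<bullet> \<rho>" if "y \<in> orbit x" for y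
    using fin ne that mu(2) unfolding m_def by auto
  have "dominant R \<rho> mu"
  proof (rule ccontr)
    assume "\<not> dominant R \<rho> mu"
    then obtain a where a: "a \<in> Pos" "mu \<bullet> a < 0" by (auto simp: dominant_iff not_le)
    obtain w where w: "w \<in> weyl_group R" "mu = w x" using mu by auto
    then have "(refl_map a \<circ> w) x \<in> orbit x"
      using a pos_root by (intro imageI weyl_group.weyl_step) auto
    then have "refl_map a mu \<bullet> \<rho> \<le> mu \<bullet> \<rho>" using max w by simp
    moreover have "cpair mu a < 0" using a root_nonzero pos_root cpair_neg_iff by blast
    ultimately show False using a mult_neg_pos[of "cpair mu a" "a \<bullet> \<rho>"]
      by (simp add: refl_map_def inner_diff_left pos_roots_iff)
  qed
  then show ?thesis using mu by blast
qed

lemma dominant_weyl_group_eq: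
  assumes mu: "dominant R \<rho> mu" and nu: "dominant R \<rho> nu"
  shows "u \<in> weyl_group R \<Longrightarrow> u mu = nu \<Longrightarrow> mu = nu"
proof (induction "wlen R \<rho> u" arbitrary: u rule: less_induct)
  case less
  show ?case
  proof (cases "wlen R \<rho> u = 0")
    case True
    then have "u = id" using wlen_eq_0_imp_id less.prems(1) by blast
    then show ?thesis using less.prems(2) by simp
  next
    case False
    then have "inversions u \<noteq> {}" by (auto simp: wlen_eq_card_inversions)
    then obtain b where b: "b \<in> Pos" "u b \<notin> Pos" by (auto simp: inversions_def)
    have uo: "orthogonal_transformation u" using weyl_group_orthogonal less.prems by auto
    have ub: "- u b \<in> Pos"
      using root_notin_pos_iff weyl_group_root[OF less.prems(1) pos_root[OF b(1)]] b(2) by blast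
    \<comment> \<open>The inversion \<open>b\<close> is orthogonal to \<open>mu\<close>, so some simple root \<open>d\<close> in its support
      fixes \<open>mu\<close> and is itself inverted by \<open>u\<close>; then \<open>u \<circ> s_d\<close> is shorter.\<close>
    have "mu \<bullet> b = - (nu \<bullet> (- u b))"
      using uo less.prems(2) unfolding orthogonal_transformation_def by (metis inner_minus_right minus_minus)
    then have mub: "mu \<bullet> b = 0" using mu nu b ub by (smt (verit) dominant_iff)
    have lf: "linear (\<lambda>y. - (u y \<bullet> \<rho>))"
      using orthogonal_transformation_linear[OF uo]
      by (intro linearI) (auto simp: linear_add linear_scale inner_add_left)
    have "0 < - (u b \<bullet> \<rho>)" using ub by (simp add: pos_roots_iff)
    then obtain d where d: "d \<in> simple_roots" "mu \<bullet> d = 0" "0 < - (u d \<bullet> \<rho>)"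
      using pos_root_support[OF b(1) _ mub lf] mu simple_pos by (auto simp: dominant_iff)
    have dR: "d \<in> R" using simple_root[OF d(1)] .
    define u' where "u' = u \<circ> refl_map d"
    have u'W: "u' \<in> weyl_group R" using weyl_group_comp_refl_map less.prems dR u'_def by auto
    have "u' d \<in> Pos"
      using d refl_map_self[OF root_nonzero[OF dR]] weyl_group_uminus[OF less.prems(1)]
        weyl_group_root[OF less.prems(1) dR]
      by (auto simp: u'_def pos_roots_iff)
    then have "wlen R \<rho> (u' \<circ> refl_map d) = Suc (wlen R \<rho> u')"
      using wlen_comp_refl_map_simple d u'W by blast
    moreover have "u' \<circ> refl_map d = u"
      using refl_map_refl_map[OF root_nonzero[OF dR]] by (auto simp: u'_def fun_eq_iff)
    moreover have "u' mu = nu"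
      using d(2) less.prems(2) cpair_eq_0_iff[of mu d] by (simp add: u'_def refl_map_def)
    ultimately show ?thesis using less.hyps u'W by auto
  qed
qed

lemma dominant_in_orbit_unique:
  assumes "mu \<in> orbit x" "nu \<in> orbit x" "dominant R \<rho> mu" "dominant R \<rho> nu"
  shows "mu = nu"
proof -
  obtain w1 w2 where w: "w1 \<in> weyl_group R" "w2 \<in> weyl_group R" "mu = w1 x" "nu = w2 x"
    using assms by auto
  obtain v where v: "v \<in> weyl_group R" "v \<circ> w1 = id" using weyl_group_inverse w by blast
  have "(w2 \<circ> v) mu = nu" using v w by (metis comp_apply id_apply)
  then show ?thesis using dominant_weyl_group_eq weyl_group_comp w v assms by blast
qed

lemma dom_weight: "dom_weight R \<rho> x \<in> orbit x" "dominant R \<rho> (dom_weight R \<rho> x)"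
proof -
  have "\<exists>!mu. mu \<in> orbit x \<and> dominant R \<rho> mu"
    using dominant_in_orbit dominant_in_orbit_unique by blast
  then show "dom_weight R \<rho> x \<in> orbit x" "dominant R \<rho> (dom_weight R \<rho> x)"
    unfolding dom_weight_def by (metis (no_types, lifting) theI')+
qed


lemma pos_gt_iff: "a \<in> pos_gt R \<rho> x \<longleftrightarrow> a \<in> Pos \<and> 0 < x \<bullet> a"
  using root_nonzero pos_root by (auto simp: pos_gt_def cpair_pos_iff)

lemma pos_lt_iff: "a \<in> pos_lt R \<rho> x \<longleftrightarrow> a \<in> Pos \<and> x \<bullet> a < 0"
  using root_nonzero pos_root by (auto simp: pos_lt_def cpair_neg_iff)

lemma pos_eq_iff: "a \<in> pos_eq R \<rho> x \<longleftrightarrow> a \<in> Pos \<and> x \<bullet> a = 0"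
  by (simp add: pos_eq_def cpair_eq_0_iff)

definition w_pos_roots :: "'a \<Rightarrow> 'a set" where
  "w_pos_roots x = pos_gt R \<rho> x \<union> uminus ` pos_lt R \<rho> x \<union> uminus ` pos_eq R \<rho> x"

lemma w_pos_roots_iff:
  "a \<in> w_pos_roots x \<longleftrightarrow> a \<in> R \<and> (0 < x \<bullet> a \<or> (x \<bullet> a = 0 \<and> - a \<in> Pos))"
  using root_notin_pos_iff[of a] root_notin_pos_iff[of "- a"]
  by (auto simp: w_pos_roots_def pos_gt_iff pos_lt_iff pos_eq_iff mem_uminus_image_iff pos_roots_iff)

lemma card_w_pos_roots: "card (w_pos_roots x) \<le> card Pos"
proof -
  have "w_pos_roots x \<subseteq> (\<lambda>a. if 0 < x \<bullet> a then a else - a) ` Pos"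
  proof
    fix a assume a: "a \<in> w_pos_roots x"
    show "a \<in> (\<lambda>a. if 0 < x \<bullet> a then a else - a) ` Pos"
    proof (cases "a \<in> Pos")
      case True
      then show ?thesis using a root_notin_pos_iff[of a] by (force simp: w_pos_roots_iff)
    next
      case False
      then have "- a \<in> Pos" "\<not> 0 < x \<bullet> - a" using a root_notin_pos_iff[of a] by (auto simp: w_pos_roots_iff)
      then show ?thesis by (force intro: image_eqI[of a _ "- a"])
    qed
  qed
  then show ?thesis using finite_pos_roots by (meson card_image_le card_mono finite_imageI order.trans)
qed

text \<open>Characterises \<open>w(\<lambda>)\<close>, the Bruhat-maximal element of \<open>{w. w \<lambda>\<^sub>+ = \<lambda>}\<close>.\<close>
definition coset_top :: "'a \<Rightarrow> ('a \<Rightarrow> 'a) \<Rightarrow> bool" where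
  "coset_top x t \<longleftrightarrow> t \<in> weyl_group R \<and> t (dom_weight R \<rho> x) = x \<and>
     (\<forall>b\<in>Pos. dom_weight R \<rho> x \<bullet> b = 0 \<longrightarrow> t b \<notin> Pos)"

lemma coset_top_above:
  "v \<in> weyl_group R \<Longrightarrow> v (dom_weight R \<rho> x) = x \<Longrightarrow> \<exists>t. coset_top x t \<and> bruhat_le R \<rho> v t"
proof (induction "card Pos - wlen R \<rho> v" arbitrary: v rule: less_induct)
  case less
  define mu where "mu = dom_weight R \<rho> x"
  show ?case
  proof (cases "coset_top x v")
    case True
    then show ?thesis by (auto simp: bruhat_le_def)
  next
    case False
    then obtain b where b: "b \<in> Pos" "mu \<bullet> b = 0" "v b \<in> Pos"
      using less.prems by (auto simp: coset_top_def mu_def)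
    \<comment> \<open>Multiplying by a simple reflection fixing \<open>mu\<close> increases the length.\<close>
    have lf: "linear (\<lambda>y. v y \<bullet> \<rho>)"
      using orthogonal_transformation_linear[OF weyl_group_orthogonal[OF less.prems(1)]]
      by (intro linearI) (auto simp: linear_add linear_scale inner_add_left)
    obtain d where d: "d \<in> simple_roots" "mu \<bullet> d = 0" "0 < v d \<bullet> \<rho>"
      using pos_root_support[OF b(1) _ b(2) lf] b dom_weight(2) simple_pos
      by (auto simp: dominant_iff pos_roots_iff mu_def)
    have dR: "d \<in> R" using simple_root[OF d(1)] .
    have vd: "v d \<in> Pos" using d weyl_group_root[OF less.prems(1) dR] by (simp add: pos_roots_iff)
    define v' where "v' = v \<circ> refl_map d"
    have v'W: "v' \<in> weyl_group R" using weyl_group_comp_refl_map less.prems dR v'_def by auto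
    have len: "wlen R \<rho> v' = Suc (wlen R \<rho> v)"
      using wlen_comp_refl_map_simple[OF d(1) less.prems(1) vd] v'_def by simp
    have "v' (dom_weight R \<rho> x) = x"
      using d(2) less.prems(2) cpair_eq_0_iff[of mu d] by (simp add: v'_def refl_map_def mu_def)
    moreover have "card Pos - wlen R \<rho> v' < card Pos - wlen R \<rho> v"
      using len wlen_le_card_pos_roots[of v'] by simp
    ultimately obtain t where t: "coset_top x t" "bruhat_le R \<rho> v' t"
      using less.hyps v'W by blast
    have "bruhat_step R \<rho> v v'" using less.prems dR len by (auto simp: bruhat_step_def v'_def)
    then have "bruhat_le R \<rho> v t" using t(2) unfolding bruhat_le_def
      by (rule converse_rtranclp_into_rtranclp)
    then show ?thesis using t by blast
  qed
qed

lemma coset_top_image: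
  assumes t: "coset_top x t" shows "t ` Pos = w_pos_roots x"
proof -
  define mu where "mu = dom_weight R \<rho> x"
  have tW: "t \<in> weyl_group R" and tmu: "t mu = x" and top: "\<forall>b\<in>Pos. mu \<bullet> b = 0 \<longrightarrow> t b \<notin> Pos"
    using t by (auto simp: coset_top_def mu_def)
  have ot: "orthogonal_transformation t" using weyl_group_orthogonal[OF tW] .
  have "t ` Pos \<subseteq> w_pos_roots x"
  proof
    fix a assume "a \<in> t ` Pos"
    then obtain b where b: "b \<in> Pos" "a = t b" by blast
    have aR: "a \<in> R" using b weyl_group_root[OF tW] pos_root by auto
    have "x \<bullet> a = mu \<bullet> b" using ot tmu b by (metis orthogonal_transformation_def)
    moreover have "0 \<le> mu \<bullet> b" using dom_weight(2) b by (auto simp: dominant_iff mu_def)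
    moreover have "mu \<bullet> b = 0 \<Longrightarrow> - a \<in> Pos" using top b root_notin_pos_iff[OF aR] by auto
    ultimately show "a \<in> w_pos_roots x" using aR by (auto simp: w_pos_roots_iff)
  qed
  moreover have "card (t ` Pos) = card Pos"
    using orthogonal_transformation_inj[OF ot] by (simp add: card_image inj_on_def inj_def)
  moreover have "finite (w_pos_roots x)"
    using finite_pos_roots by (simp add: w_pos_roots_def pos_gt_def pos_lt_def pos_eq_def)
  ultimately show ?thesis using card_seteq card_w_pos_roots by metis
qed

lemma coset_top_unique: "coset_top x t \<Longrightarrow> coset_top x t' \<Longrightarrow> t = t'"
  using weyl_group_eqI coset_top_image by (metis coset_top_def order.refl)

lemma coset_top_w_of: "coset_top x (w_of R \<rho> x)"
proof -
  obtain w0 where w0: "w0 \<in> weyl_group R" "dom_weight R \<rho> x = w0 x" using dom_weight(1) by blast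
  obtain v0 where v0: "v0 \<in> weyl_group R" "v0 \<circ> w0 = id" using weyl_group_inverse w0 by blast
  have "v0 (dom_weight R \<rho> x) = x" using v0 w0 by (metis comp_apply id_apply)
  then obtain t where t: "coset_top x t" using coset_top_above[OF v0(1)] by blast
  have above: "bruhat_le R \<rho> v t" if "v \<in> weyl_group R" "v (dom_weight R \<rho> x) = x" for v
    using coset_top_above[OF that] coset_top_unique[OF t] by blast
  have "w_of R \<rho> x = t"
    unfolding w_of_def
  proof (rule the_equality)
    show "t \<in> weyl_group R \<and> t (dom_weight R \<rho> x) = x \<and>
        (\<forall>v\<in>weyl_group R. v (dom_weight R \<rho> x) = x \<longrightarrow> bruhat_le R \<rho> v t)"
      using t above by (auto simp: coset_top_def)
  next
    fix w assume "w \<in> weyl_group R \<and> w (dom_weight R \<rho> x) = x \<and>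
        (\<forall>v\<in>weyl_group R. v (dom_weight R \<rho> x) = x \<longrightarrow> bruhat_le R \<rho> v w)"
    then show "w = t" using t above bruhat_le_antisym by (auto simp: coset_top_def)
  qed
  then show ?thesis using t by simp
qed


section \<open>The bijection\<close>

lemma pos_roots_half_space: "\<forall>a\<in>Pos. 0 < a \<bullet> \<rho>"
  by (simp add: pos_roots_iff)

definition pos_le :: "'a \<Rightarrow> 'a set" where
  "pos_le x = pos_lt R \<rho> x \<union> pos_eq R \<rho> x"

lemma pos_le_iff: "a \<in> pos_le x \<longleftrightarrow> a \<in> Pos \<and> x \<bullet> a \<le> 0"
  by (auto simp: pos_le_def pos_lt_iff pos_eq_iff)

lemma pos_le_subset: "pos_le x \<subseteq> Pos"
  by (auto simp: pos_le_iff)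

lemma pos_roots_diff_pos_le: "Pos - pos_le x = pos_gt R \<rho> x"
  by (auto simp: pos_le_iff pos_gt_iff)

lemma w_pos_roots_eq: "w_pos_roots x = Pos - pos_le x \<union> uminus ` pos_le x"
  unfolding w_pos_roots_def pos_roots_diff_pos_le by (simp add: pos_le_def image_Un Un_assoc)

lemma w_pos_roots_diff_uminus: "w_pos_roots x - uminus ` pos_le x \<union> pos_le x = Pos"
proof -
  have "(Pos - pos_le x) \<inter> uminus ` pos_le x = {}"
    using half_space_disjoint_uminus[OF pos_roots_half_space pos_le_subset] .
  then have "w_pos_roots x - uminus ` pos_le x = Pos - pos_le x"
    unfolding w_pos_roots_eq by blast
  then show ?thesis using pos_le_subset[of x] by blast
qed

lemma image_w_of: "w_of R \<rho> x ` Pos = w_pos_roots x"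
  using coset_top_image coset_top_w_of by blast

lemma w_pos_roots_half_space: "\<forall>a\<in>w_pos_roots x. 0 < a \<bullet> w_of R \<rho> x \<rho>"
proof -
  have "orthogonal_transformation (w_of R \<rho> x)"
    using coset_top_w_of weyl_group_orthogonal by (auto simp: coset_top_def)
  then show ?thesis
    unfolding image_w_of[symmetric] by (auto simp: orthogonal_transformation_def pos_roots_iff)
qed

lemma RO_posD:
  assumes "r \<in> RO_pos R \<rho> x"
  shows "reflection_order Pos r"
    and "a \<in> pos_le x \<Longrightarrow> b \<in> pos_gt R \<rho> x \<Longrightarrow> (a, b) \<in> r"
    and "a \<in> pos_lt R \<rho> x \<Longrightarrow> b \<in> pos_eq R \<rho> x \<Longrightarrow> (a, b) \<in> r"
  using assms by (auto simp: RO_pos_def pos_le_def)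

lemma RO_pos_initial:
  assumes r: "r \<in> RO_pos R \<rho> x" shows "\<forall>(a, b)\<in>r. b \<in> pos_le x \<longrightarrow> a \<in> pos_le x"
proof (clarify)
  fix a b assume ab: "(a, b) \<in> r" and b: "b \<in> pos_le x"
  have sto: "strict_total_order_on Pos r"
    using RO_posD(1)[OF r] by (simp add: reflection_order_def)
  then have "a \<in> Pos" using ab by (auto simp: strict_total_order_on_def)
  moreover have "(b, a) \<notin> r" using strict_total_order_on_asym[OF sto ab] .
  ultimately show "a \<in> pos_le x"
    using RO_posD(2)[OF r b] pos_roots_diff_pos_le by blast
qed

lemma induced_order_eq_rotate:
  assumes r: "r \<in> RO_pos R \<rho> x" shows "induced_order R \<rho> x r = rotate Pos (pos_le x) r"
proof -
  have sto: "strict_total_order_on Pos r"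
    using RO_posD(1)[OF r] by (simp add: reflection_order_def)
  have "(a, b) \<in> induced_order R \<rho> x r \<longleftrightarrow> (a, b) \<in> rotate Pos (pos_le x) r" for a b
  proof -
    have "- a \<in> pos_lt R \<rho> x \<Longrightarrow> - b \<in> pos_eq R \<rho> x \<Longrightarrow> (- a, - b) \<in> r"
      and "- a \<in> pos_eq R \<rho> x \<Longrightarrow> - b \<in> pos_lt R \<rho> x \<Longrightarrow> (- a, - b) \<notin> r"
      using RO_posD(3)[OF r] strict_total_order_on_asym[OF sto] by blast+
    moreover have "(a, b) \<in> r \<Longrightarrow> a \<in> Pos \<and> b \<in> Pos"
      using sto by (auto simp: strict_total_order_on_def)
    moreover have "pos_gt R \<rho> x = Pos - pos_le x" "pos_lt R \<rho> x \<inter> pos_eq R \<rho> x = {}"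
      using pos_roots_diff_pos_le by (auto simp: pos_lt_iff pos_eq_iff)
    ultimately show ?thesis
      unfolding induced_order_def rotate_iff mem_uminus_image_iff by (auto simp: pos_le_def)
  qed
  then show ?thesis by auto
qed


lemma rotate_in_RO_w:
  assumes r: "r \<in> RO_pos R \<rho> x" shows "rotate Pos (pos_le x) r \<in> RO_w R \<rho> x"
proof -
  have "reflection_order (w_pos_roots x) (rotate Pos (pos_le x) r)"
    using reflection_order_rotate[OF RO_posD(1)[OF r] pos_le_subset RO_pos_initial[OF r]
        pos_roots_half_space]
    by (simp add: w_pos_roots_eq)
  moreover have "(a, - b) \<in> rotate Pos (pos_le x) r"
    if "a \<in> pos_gt R \<rho> x" "b \<in> pos_le x" for a b
    using that pos_roots_diff_pos_le by (simp add: rotate_iff)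
  moreover have "(- a, - b) \<in> rotate Pos (pos_le x) r"
    if "a \<in> pos_lt R \<rho> x" "b \<in> pos_eq R \<rho> x" for a b
    using that RO_posD(3)[OF r] by (simp add: rotate_iff pos_le_def)
  ultimately show ?thesis by (simp add: RO_w_def image_w_of pos_le_def)
qed

lemma RO_wD:
  assumes "q \<in> RO_w R \<rho> x"
  shows "reflection_order (w_pos_roots x) q"
    and "a \<in> pos_gt R \<rho> x \<Longrightarrow> - b \<in> pos_le x \<Longrightarrow> (a, b) \<in> q"
    and "- a \<in> pos_lt R \<rho> x \<Longrightarrow> - b \<in> pos_eq R \<rho> x \<Longrightarrow> (a, b) \<in> q"
proof -
  show "reflection_order (w_pos_roots x) q" using assms by (simp add: RO_w_def image_w_of)
  show "(a, b) \<in> q" if "a \<in> pos_gt R \<rho> x" "- b \<in> pos_le x"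
    using assms that unfolding RO_w_def pos_le_def by (metis (no_types, lifting) Un_iff mem_Collect_eq minus_minus)
  show "(a, b) \<in> q" if "- a \<in> pos_lt R \<rho> x" "- b \<in> pos_eq R \<rho> x"
    using assms that unfolding RO_w_def by (metis (no_types, lifting) mem_Collect_eq minus_minus)
qed

lemma RO_w_final:
  assumes q: "q \<in> RO_w R \<rho> x"
  shows "\<forall>(a, b)\<in>converse q. b \<in> uminus ` pos_le x \<longrightarrow> a \<in> uminus ` pos_le x"
proof -
  have sto: "strict_total_order_on (w_pos_roots x) q"
    using RO_wD(1)[OF q] by (simp add: reflection_order_def)
  have "a \<in> uminus ` pos_le x" if ba: "(b, a) \<in> q" and b: "- b \<in> pos_le x" for a b
  proof -
    have "a \<in> w_pos_roots x" using ba sto by (auto simp: strict_total_order_on_def)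
    moreover have "(a, b) \<notin> q" using strict_total_order_on_asym[OF sto ba] .
    ultimately show "a \<in> uminus ` pos_le x"
      using RO_wD(2)[OF q _ b] pos_roots_diff_pos_le by (auto simp: w_pos_roots_eq)
  qed
  then show ?thesis by (auto simp: mem_uminus_image_iff)
qed

definition unrotate :: "'a \<Rightarrow> 'a rel \<Rightarrow> 'a rel" where
  "unrotate x q = converse (rotate (w_pos_roots x) (uminus ` pos_le x) (converse q))"

lemma uminus_pos_le_subset: "uminus ` pos_le x \<subseteq> w_pos_roots x"
  by (auto simp: w_pos_roots_eq)

lemma unrotate_in_RO_pos:
  assumes q: "q \<in> RO_w R \<rho> x" shows "unrotate x q \<in> RO_pos R \<rho> x"
proof -
  have "reflection_order Pos (unrotate x q)"
    using reflection_order_converse[OF reflection_order_rotate[OF reflection_order_converse[OF RO_wD(1)[OF q]]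
        uminus_pos_le_subset RO_w_final[OF q] w_pos_roots_half_space]]
    by (simp add: unrotate_def image_image w_pos_roots_diff_uminus)
  moreover have "(a, b) \<in> unrotate x q" if "a \<in> pos_le x" "b \<in> pos_gt R \<rho> x" for a b
  proof -
    have "b \<in> w_pos_roots x - uminus ` pos_le x"
      using that(2)
      by (auto simp: w_pos_roots_def mem_uminus_image_iff pos_le_iff pos_gt_iff pos_roots_iff)
    then show ?thesis using that(1) by (simp add: unrotate_def rotate_iff)
  qed
  moreover have "(a, b) \<in> unrotate x q" if "a \<in> pos_lt R \<rho> x" "b \<in> pos_eq R \<rho> x" for a b
    using that RO_wD(3)[OF q, of "- a" "- b"] by (simp add: unrotate_def rotate_iff pos_le_def)
  ultimately show ?thesis by (simp add: RO_pos_def pos_le_def)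
qed

lemma unrotate_induced_order:
  assumes r: "r \<in> RO_pos R \<rho> x" shows "unrotate x (induced_order R \<rho> x r) = r"
  unfolding unrotate_def induced_order_eq_rotate[OF r] w_pos_roots_eq
proof (rule converse_rotate_rotate[OF _ pos_le_subset RO_pos_initial[OF r]])
  show "strict_total_order_on Pos r" using RO_posD(1)[OF r] by (simp add: reflection_order_def)
  show "(Pos - pos_le x) \<inter> uminus ` pos_le x = {}"
    using half_space_disjoint_uminus[OF pos_roots_half_space pos_le_subset] .
qed

lemma induced_order_unrotate:
  assumes q: "q \<in> RO_w R \<rho> x" shows "induced_order R \<rho> x (unrotate x q) = q"
proof -
  let ?J = "uminus ` pos_le x"
  have "converse (rotate (w_pos_roots x - ?J \<union> uminus ` ?J) (uminus ` ?J)
      (converse (rotate (w_pos_roots x) ?J (converse q)))) = converse q"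
  proof (rule converse_rotate_rotate[OF _ uminus_pos_le_subset RO_w_final[OF q]])
    show "strict_total_order_on (w_pos_roots x) (converse q)"
      using reflection_order_converse[OF RO_wD(1)[OF q]] by (simp add: reflection_order_def)
    show "(w_pos_roots x - ?J) \<inter> uminus ` ?J = {}"
      using half_space_disjoint_uminus[OF w_pos_roots_half_space uminus_pos_le_subset] .
  qed
  then have "rotate Pos (pos_le x) (unrotate x q) = q"
    by (simp add: unrotate_def w_pos_roots_diff_uminus image_image)
  then show ?thesis using induced_order_eq_rotate[OF unrotate_in_RO_pos[OF q]] by simp
qed

end

theorem proposition2p12:
  fixes R :: "'a::euclidean_space set" and \<rho> :: 'a and lam :: 'a
  assumes "root_system R" and "irreducible_rs R" and "regular_vec R \<rho>"
    and "lam \<in> weights R"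
  shows "(\<forall>r\<in>RO_pos R \<rho> lam. induced_order R \<rho> lam r \<in> RO_w R \<rho> lam) \<and>
         bij_betw (induced_order R \<rho> lam) (RO_pos R \<rho> lam) (RO_w R \<rho> lam)"
proof -
  interpret positive_system R \<rho> using assms(1,3) by unfold_locales
  have into: "\<forall>r\<in>RO_pos R \<rho> lam. induced_order R \<rho> lam r \<in> RO_w R \<rho> lam"
    using rotate_in_RO_w induced_order_eq_rotate by simp
  moreover have "bij_betw (induced_order R \<rho> lam) (RO_pos R \<rho> lam) (RO_w R \<rho> lam)"
  proof (rule bij_betw_byWitness[where f' = "unrotate lam"])
    show "\<forall>r\<in>RO_pos R \<rho> lam. unrotate lam (induced_order R \<rho> lam r) = r"
      using unrotate_induced_order by blast
    show "\<forall>q\<in>RO_w R \<rho> lam. induced_order R \<rho> lam (unrotate lam q) = q"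
      using induced_order_unrotate by blast
    show "induced_order R \<rho> lam ` RO_pos R \<rho> lam \<subseteq> RO_w R \<rho> lam"
      using into by blast
    show "unrotate lam ` RO_w R \<rho> lam \<subseteq> RO_pos R \<rho> lam"
      using unrotate_in_RO_pos by blast
  qed
  ultimately show ?thesis ..
qed

end
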